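(* Let $K$ be an algebraically closed field and $\varphi:V\to V$ a $K$-linear map of a finite dimensional $K$-vector space $V$. Let $\{\lambda_1,\dots,\lambda_p\}\subseteq K$ be the set of all ($p$ distinct) eigenvalues of $\varphi$ and $m_i=\dim(\ker(\varphi-\lambda_i1_V))$. Then for each $1\le i\le p$ there exists a $K$-subalgebra $\mathcal M_i$ of the full matrix algebra $M_{m_i\times m_i}(K[t])$ such that the centralizer $C_\varphi=\{\psi\in\mathrm{Hom}_K(V,V)\mid\psi\circ\varphi=\varphi\circ\psi\}$ is a homomorphic image of the direct product $K$-algebra $\mathcal M_1\times\mathcal M_2\times\cdots\times\mathcal M_p$.
   Context: $K[t]$ is the polynomial ring over $K$ in one indeterminate. *)

theory Defs
  imports "HOL-Computational_Algebra.Polynomial" "Jordan_Normal_Form.Matrix"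
begin

definition mat_poly_subalgebra :: "nat \<Rightarrow> 'k::field poly mat set \<Rightarrow> bool" where
  "mat_poly_subalgebra m M \<longleftrightarrow>
     M \<subseteq> carrier_mat m m \<and> 1\<^sub>m m \<in> M \<and>
     (\<forall>A\<in>M. \<forall>B\<in>M. A + B \<in> M \<and> A * B \<in> M) \<and>
     (\<forall>c. \<forall>A\<in>M. [:c:] \<cdot>\<^sub>m A \<in> M)"

definition eigenvalues :: "('k::field \<Rightarrow> 'v::ab_group_add \<Rightarrow> 'v) \<Rightarrow> ('v \<Rightarrow> 'v) \<Rightarrow> 'k set" where
  "eigenvalues scale \<phi> = {\<mu>. \<exists>v. v \<noteq> 0 \<and> \<phi> v = scale \<mu> v}"

definition geom_mult :: "('k::field \<Rightarrow> 'v::ab_group_add \<Rightarrow> 'v) \<Rightarrow> ('v \<Rightarrow> 'v) \<Rightarrow> 'k \<Rightarrow> nat" where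
  "geom_mult scale \<phi> \<mu> = vector_space.dim scale {v. \<phi> v - scale \<mu> v = 0}"

definition centralizer :: "('k::field \<Rightarrow> 'v::ab_group_add \<Rightarrow> 'v) \<Rightarrow> ('v \<Rightarrow> 'v) \<Rightarrow> ('v \<Rightarrow> 'v) set" where
  "centralizer scale \<phi> = {\<psi>. Vector_Spaces.linear scale scale \<psi> \<and> \<psi> \<circ> \<phi> = \<phi> \<circ> \<psi>}"

end

theory Submission
  imports Defs
begin

text \<open>The annihilating polynomial of \<open>\<phi>\<close> splits into powers of linear factors
  \<open>(t - \<lambda>)\<^bsup>k\<^sub>\<lambda>\<^esup>\<close>, and the Chinese remainder theorem provides polynomials \<open>e\<^sub>\<lambda>\<close> such that
  the \<open>e\<^sub>\<lambda>(\<phi>)\<close> are the projections onto the primary components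
  \<open>W\<^sub>\<lambda> = ker (\<phi> - \<lambda>)\<^bsup>k\<^sub>\<lambda>\<^esup>\<close>; being polynomials in \<open>\<phi>\<close>, they commute with the centralizer,
  which therefore preserves every \<open>W\<^sub>\<lambda>\<close>. Since \<open>\<phi> - \<lambda>\<close> is nilpotent on \<open>W\<^sub>\<lambda>\<close>, a
  Nakayama-type argument shows that \<open>W\<^sub>\<lambda>\<close> is generated as a \<open>K[t]\<close>-module by
  \<open>m\<^sub>\<lambda> = dim ker (\<phi> - \<lambda>)\<close> vectors, i.e. it is the image of a \<open>K[t]\<close>-linear surjection
  \<open>K[t]\<^bsup>m\<^sub>\<lambda>\<^esup> \<rightarrow> W\<^sub>\<lambda>\<close>. The algebra \<open>\<M>\<^sub>\<lambda>\<close> consists of the matrices lifting some element of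
  the centralizer along this surjection, and letting the \<open>\<lambda>\<close>-th matrix act on the \<open>\<lambda>\<close>-th primary
  component defines a surjective algebra homomorphism \<open>\<Prod>\<^sub>\<lambda> \<M>\<^sub>\<lambda> \<rightarrow> C\<^sub>\<phi>\<close>.\<close>

subsection \<open>Comaximal elements\<close>

text \<open>Coprimality in the ideal-theoretic sense \<open>(a) + (b) = (1)\<close>; unlike \<open>coprime\<close>, it needs
  no gcd structure, which \<open>'k poly\<close> lacks for a general field \<open>'k\<close>.\<close>
definition comaximal :: "'a::comm_ring_1 \<Rightarrow> 'a \<Rightarrow> bool" where
  "comaximal a b \<longleftrightarrow> (\<exists>x y. x * a + y * b = 1)"

lemma comaximal_commute: "comaximal a b \<longleftrightarrow> comaximal b a"
  unfolding comaximal_def by (metis add.commute)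

lemma comaximal_mult_right:
  assumes "comaximal a b" "comaximal a c"
  shows "comaximal a (b * c)"
proof -
  obtain x y x' y' where "x * a + y * b = 1" "x' * a + y' * c = 1"
    using assms unfolding comaximal_def by blast
  then have "(x * a + y * b) * (x' * a + y' * c) = 1" by simp
  then have "(x * x' * a + x * y' * c + y * b * x') * a + (y * y') * (b * c) = 1"
    by (simp add: algebra_simps)
  then show ?thesis unfolding comaximal_def by blast
qed

lemma comaximal_one_right: "comaximal a 1"
  unfolding comaximal_def by (rule exI[of _ 0], rule exI[of _ 1]) simp

lemma comaximal_prod_right:
  "(\<And>i. i \<in> S \<Longrightarrow> comaximal a (f i)) \<Longrightarrow> comaximal a (\<Prod>i\<in>S. f i)"
  by (induction S rule: infinite_finite_induct) (simp_all add: comaximal_one_right comaximal_mult_right)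

lemma comaximal_power:
  assumes "comaximal a b"
  shows "comaximal (a ^ i) (b ^ j)"
proof -
  have power_right: "comaximal c (d ^ n)" if "comaximal c d" for c d :: 'a and n
    using comaximal_prod_right[of "{..<n}" c "\<lambda>_. d"] that by simp
  show ?thesis
    using power_right[of a b j] assms power_right[of "b ^ j" a i] by (simp add: comaximal_commute)
qed

lemma comaximal_dvd_mult:
  assumes "a dvd c" "b dvd c" "comaximal a b"
  shows "a * b dvd c"
proof -
  obtain x y where xy: "x * a + y * b = 1" using assms(3) unfolding comaximal_def by blast
  obtain s t where s: "c = a * s" and t: "c = b * t" using assms(1,2) by (elim dvdE)
  have "c = x * a * c + y * b * c" using xy by (metis distrib_right mult_1)
  also have "x * a * c = a * b * (x * t)" by (subst t) (simp add: ac_simps)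
  also have "y * b * c = a * b * (y * s)" by (subst s) (simp add: ac_simps)
  finally have "c = a * b * (x * t + y * s)" by (simp add: distrib_left)
  then show ?thesis ..
qed

lemma prod_dvd_if_pairwise_comaximal:
  assumes "finite S" "\<And>i j. i \<in> S \<Longrightarrow> j \<in> S \<Longrightarrow> i \<noteq> j \<Longrightarrow> comaximal (q i) (q j)"
    and "\<And>i. i \<in> S \<Longrightarrow> q i dvd c"
  shows "(\<Prod>i\<in>S. q i) dvd c"
  using assms
proof (induction S rule: finite_induct)
  case (insert i S)
  have "comaximal (q i) (\<Prod>j\<in>S. q j)"
    using insert by (intro comaximal_prod_right) auto
  with insert show ?case by (simp add: comaximal_dvd_mult)
qed simp

lemma comaximal_linear_poly:
  fixes a b :: "'k::field"
  assumes "a \<noteq> b"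
  shows "comaximal [:-a, 1:] [:-b, 1:]"
proof -
  have "[:inverse (b - a):] * [:-a, 1:] + [:- inverse (b - a):] * [:-b, 1:] = [:inverse (b - a) * (b - a):]"
    by (simp add: algebra_simps)
  also have "\<dots> = 1" using assms by (simp add: one_pCons)
  finally show ?thesis unfolding comaximal_def by blast
qed

text \<open>The idempotents of the Chinese remainder theorem for a pairwise comaximal family.\<close>
lemma comaximal_partition_of_unity:
  fixes q :: "'i \<Rightarrow> 'a::comm_ring_1"
  assumes fin: "finite S" and cmx: "\<And>i j. i \<in> S \<Longrightarrow> j \<in> S \<Longrightarrow> i \<noteq> j \<Longrightarrow> comaximal (q i) (q j)"
  obtains e where "\<And>i. i \<in> S \<Longrightarrow> (\<Prod>j\<in>S. q j) dvd q i * e i"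
    and "\<And>i j. i \<in> S \<Longrightarrow> j \<in> S \<Longrightarrow> i \<noteq> j \<Longrightarrow> q i dvd e j"
    and "\<And>i. i \<in> S \<Longrightarrow> q i dvd 1 - e i"
    and "(\<Prod>j\<in>S. q j) dvd 1 - (\<Sum>i\<in>S. e i)"
proof -
  define r where "r i = (\<Prod>j\<in>S - {i}. q j)" for i
  have "comaximal (r i) (q i)" if "i \<in> S" for i
    unfolding r_def using that cmx by (subst comaximal_commute) (auto intro: comaximal_prod_right)
  then obtain x y where xy: "\<And>i. i \<in> S \<Longrightarrow> x i * r i + y i * q i = 1"
    unfolding comaximal_def by metis
  define e where "e i = x i * r i" for i
  have qr: "q i * r i = (\<Prod>j\<in>S. q j)" if "i \<in> S" for i
    unfolding r_def using fin that by (simp add: prod.remove)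
  have q_dvd_other: "q i dvd e j" if "i \<in> S" "j \<in> S" "i \<noteq> j" for i j
    unfolding e_def r_def using fin that by (intro dvd_mult dvd_prodI) auto
  have q_dvd_compl: "q i dvd 1 - e i" if "i \<in> S" for i
  proof -
    have "1 - e i = y i * q i" using xy[OF that] unfolding e_def by (metis add_diff_cancel_left')
    then show ?thesis by simp
  qed
  have "q i dvd 1 - (\<Sum>j\<in>S. e j)" if i: "i \<in> S" for i
  proof -
    have "1 - (\<Sum>j\<in>S. e j) = (1 - e i) - (\<Sum>j\<in>S - {i}. e j)"
      using fin i by (simp add: sum.remove)
    moreover have "q i dvd (\<Sum>j\<in>S - {i}. e j)"
      using q_dvd_other[OF i] by (intro dvd_sum) auto
    ultimately show ?thesis
      using q_dvd_compl[OF i] by (metis dvd_diff)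
  qed
  then have "(\<Prod>j\<in>S. q j) dvd 1 - (\<Sum>i\<in>S. e i)"
    by (intro prod_dvd_if_pairwise_comaximal fin cmx)
  moreover have "(\<Prod>j\<in>S. q j) dvd q i * e i" if "i \<in> S" for i
    using qr[OF that] unfolding e_def by (metis dvd_triv_right mult.left_commute)
  ultimately show ?thesis using that q_dvd_other q_dvd_compl by blast
qed

locale linear_endo = vector_space scale
  for scale :: "'k::field \<Rightarrow> 'v::ab_group_add \<Rightarrow> 'v" (infixr "*s" 75) +
  fixes \<phi> :: "'v \<Rightarrow> 'v"
  assumes linear_phi: "Vector_Spaces.linear scale scale \<phi>"
begin

sublocale vector_space_pair scale scale ..

lemma linear_endoI:
  assumes "\<And>x y. f (x + y) = f x + f y" "\<And>c x. f (c *s x) = c *s f x"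
  shows "Vector_Spaces.linear scale scale f"
  using assms vector_space_axioms by (simp add: Vector_Spaces.linear_iff)

lemma centralizerI:
  "Vector_Spaces.linear scale scale \<psi> \<Longrightarrow> (\<And>v. \<psi> (\<phi> v) = \<phi> (\<psi> v)) \<Longrightarrow> \<psi> \<in> centralizer scale \<phi>"
  by (auto simp: centralizer_def)

lemma centralizer_linear: "\<psi> \<in> centralizer scale \<phi> \<Longrightarrow> Vector_Spaces.linear scale scale \<psi>"
  by (simp add: centralizer_def)

lemma centralizer_commute: "\<psi> \<in> centralizer scale \<phi> \<Longrightarrow> \<psi> (\<phi> v) = \<phi> (\<psi> v)"
  by (auto simp: centralizer_def fun_eq_iff)

lemma id_in_centralizer: "id \<in> centralizer scale \<phi>"
  by (rule centralizerI[OF linear_endoI]) simp_all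

lemma zero_in_centralizer: "(\<lambda>v. 0) \<in> centralizer scale \<phi>"
  by (rule centralizerI[OF linear_endoI]) (simp_all add: linear_0[OF linear_phi])

lemma phi_in_centralizer: "\<phi> \<in> centralizer scale \<phi>"
  by (intro centralizerI linear_phi) simp

lemma centralizer_add:
  assumes "\<psi> \<in> centralizer scale \<phi>" "\<chi> \<in> centralizer scale \<phi>"
  shows "(\<lambda>v. \<psi> v + \<chi> v) \<in> centralizer scale \<phi>"
  using linear_add[OF centralizer_linear[OF assms(1)]] linear_add[OF centralizer_linear[OF assms(2)]]
    linear_scale[OF centralizer_linear[OF assms(1)]] linear_scale[OF centralizer_linear[OF assms(2)]]
  by (intro centralizerI linear_endoI)
    (simp_all add: linear_add[OF linear_phi] centralizer_commute[OF assms(1)]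
      centralizer_commute[OF assms(2)] scale_right_distrib ac_simps)

lemma centralizer_scale:
  assumes "\<psi> \<in> centralizer scale \<phi>"
  shows "(\<lambda>v. c *s \<psi> v) \<in> centralizer scale \<phi>"
  using linear_add[OF centralizer_linear[OF assms]] linear_scale[OF centralizer_linear[OF assms]]
  by (intro centralizerI linear_endoI)
    (simp_all add: linear_scale[OF linear_phi] centralizer_commute[OF assms]
      scale_right_distrib mult.commute)

lemma centralizer_comp:
  assumes "\<psi> \<in> centralizer scale \<phi>" "\<chi> \<in> centralizer scale \<phi>"
  shows "\<psi> \<circ> \<chi> \<in> centralizer scale \<phi>"
  using linear_add[OF centralizer_linear[OF assms(1)]] linear_add[OF centralizer_linear[OF assms(2)]]
    linear_scale[OF centralizer_linear[OF assms(1)]] linear_scale[OF centralizer_linear[OF assms(2)]]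
  by (intro centralizerI linear_endoI)
    (simp_all add: centralizer_commute[OF assms(1)] centralizer_commute[OF assms(2)])

lemma centralizer_sum:
  "(\<And>i. i \<in> I \<Longrightarrow> \<psi> i \<in> centralizer scale \<phi>) \<Longrightarrow> (\<lambda>v. \<Sum>i\<in>I. \<psi> i v) \<in> centralizer scale \<phi>"
  by (induction I rule: infinite_finite_induct) (auto simp: zero_in_centralizer centralizer_add)

subsection \<open>Polynomials in \<open>\<phi>\<close>\<close>

definition peval :: "'k poly \<Rightarrow> 'v \<Rightarrow> 'v" where
  "peval p v = (\<Sum>i\<le>degree p. coeff p i *s (\<phi> ^^ i) v)"

lemma peval_eq_sum: "degree p \<le> n \<Longrightarrow> peval p v = (\<Sum>i\<le>n. coeff p i *s (\<phi> ^^ i) v)"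
  unfolding peval_def by (rule sum.mono_neutral_left) (auto simp: coeff_eq_0)

lemma peval_add: "peval (p + q) v = peval p v + peval q v"
proof -
  let ?n = "max (degree p) (degree q)"
  have "peval (p + q) v = (\<Sum>i\<le>?n. coeff (p + q) i *s (\<phi> ^^ i) v)"
    by (rule peval_eq_sum) (simp add: degree_add_le)
  also have "\<dots> = peval p v + peval q v"
    by (simp add: peval_eq_sum[of p ?n] peval_eq_sum[of q ?n] scale_left_distrib sum.distrib)
  finally show ?thesis .
qed

lemma peval_smult: "peval (Polynomial.smult c p) v = c *s peval p v"
proof -
  have "peval (Polynomial.smult c p) v = (\<Sum>i\<le>degree p. coeff (Polynomial.smult c p) i *s (\<phi> ^^ i) v)"
    by (rule peval_eq_sum) (simp add: degree_smult_le)
  then show ?thesis by (simp add: peval_def scale_sum_right)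
qed

lemma peval_const: "peval [:c:] v = c *s v"
  by (simp add: peval_def)

lemma peval_one [simp]: "peval 1 v = v"
  using peval_const[of 1 v] by (simp add: one_pCons)

lemma peval_0 [simp]: "peval 0 v = 0"
  by (simp add: peval_def)

lemma peval_monom: "peval (monom c n) v = c *s (\<phi> ^^ n) v"
proof -
  have "peval (monom c n) v = (\<Sum>i\<le>n. coeff (monom c n) i *s (\<phi> ^^ i) v)"
    by (rule peval_eq_sum) (simp add: degree_monom_le)
  also have "\<dots> = (\<Sum>i\<in>{n}. coeff (monom c n) i *s (\<phi> ^^ i) v)"
    by (rule sum.mono_neutral_right) (auto simp: coeff_monom)
  finally show ?thesis by simp
qed

lemma peval_pCons: "peval (pCons a p) v = a *s v + \<phi> (peval p v)"
proof -
  have "peval (pCons 0 p) v = (\<Sum>i\<le>Suc (degree p). coeff (pCons 0 p) i *s (\<phi> ^^ i) v)"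
    by (rule peval_eq_sum) (simp add: degree_pCons_le)
  also have "\<dots> = (\<Sum>i\<le>degree p. coeff p i *s (\<phi> ^^ Suc i) v)"
    by (subst sum.atMost_Suc_shift) simp
  also have "\<dots> = \<phi> (peval p v)"
    by (simp add: peval_def linear_sum[OF linear_phi] linear_scale[OF linear_phi])
  finally have "peval (pCons 0 p) v = \<phi> (peval p v)" .
  moreover have "pCons a p = [:a:] + pCons 0 p" by simp
  ultimately show ?thesis by (metis peval_add peval_const)
qed

lemma peval_in_centralizer: "peval p \<in> centralizer scale \<phi>"
proof (induction p)
  case (pCons a p)
  have "peval (pCons a p) = (\<lambda>v. a *s id v + (\<phi> \<circ> peval p) v)"
    by (simp add: fun_eq_iff peval_pCons)
  then show ?case
    using centralizer_add[OF centralizer_scale[OF id_in_centralizer]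
        centralizer_comp[OF phi_in_centralizer pCons.IH]]
    by simp
next
  case 0
  have "peval 0 = (\<lambda>v. 0)" by (simp add: fun_eq_iff)
  then show ?case by (simp add: zero_in_centralizer)
qed

lemma linear_peval: "Vector_Spaces.linear scale scale (peval p)"
  by (rule centralizer_linear[OF peval_in_centralizer])

lemma peval_vadd: "peval p (x + y) = peval p x + peval p y"
  by (rule linear_add[OF linear_peval])

lemma peval_vsum: "peval p (\<Sum>i\<in>I. f i) = (\<Sum>i\<in>I. peval p (f i))"
  by (rule linear_sum[OF linear_peval])

lemma peval_v0 [simp]: "peval p 0 = 0"
  by (rule linear_0[OF linear_peval])

lemma peval_centralizer_commute:
  assumes "\<psi> \<in> centralizer scale \<phi>"
  shows "peval p (\<psi> v) = \<psi> (peval p v)"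
proof -
  note lin = centralizer_linear[OF assms]
  show ?thesis
    by (induction p) (simp_all add: peval_pCons centralizer_commute[OF assms] linear_0[OF lin]
      linear_add[OF lin] linear_scale[OF lin])
qed

lemma peval_mult: "peval (p * q) v = peval p (peval q v)"
proof (induction p)
  case (pCons a p)
  have "pCons a p * q = Polynomial.smult a q + pCons 0 (p * q)" by simp
  then show ?case by (simp only: peval_add peval_smult peval_pCons pCons.IH) simp
qed simp

lemma peval_commute: "peval p (peval q v) = peval q (peval p v)"
  by (simp only: peval_mult[symmetric] mult.commute)

lemma peval_diff: "peval (p - q) v = peval p v - peval q v"
  using peval_add[of "p - q" q v] by (simp add: eq_diff_eq)

lemma peval_sum: "peval (\<Sum>i\<in>I. p i) v = (\<Sum>i\<in>I. peval (p i) v)"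
  by (induction I rule: infinite_finite_induct) (auto simp: peval_add)

lemma peval_eigenvector: "\<phi> w = a *s w \<Longrightarrow> peval p w = poly p a *s w"
  by (induction p) (simp_all add: peval_pCons linear_scale[OF linear_phi] scale_left_distrib mult.commute)

lemma peval_dvd_eq_0: "q dvd p \<Longrightarrow> peval q w = 0 \<Longrightarrow> peval p w = 0"
  by (auto elim!: dvdE simp: mult.commute[of q] peval_mult)

lemma peval_linear_factor: "peval [:-a, 1:] v = \<phi> v - a *s v"
proof -
  have "peval [:-a, 1:] v = - a *s v + \<phi> v"
    by (simp add: peval_pCons linear_0[OF linear_phi])
  then show ?thesis by (simp add: scale_minus_left)
qed

lemma kernel_linear_factor: "{v. \<phi> v - a *s v = 0} = {v. peval [:-a, 1:] v = 0}"
  by (simp add: peval_linear_factor)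

lemma peval_linear_factor_power_eq_0D:
  assumes "a \<notin> eigenvalues scale \<phi>" "peval ([:-a, 1:] ^ n) w = 0"
  shows "w = 0"
  using assms(2)
proof (induction n arbitrary: w)
  case (Suc n)
  let ?u = "peval ([:-a, 1:] ^ n) w"
  have "\<phi> ?u - a *s ?u = 0"
    using Suc.prems by (simp only: power_Suc peval_mult peval_linear_factor)
  then have "?u = 0" using assms(1) by (auto simp: eigenvalues_def)
  then show ?case using Suc.IH by simp
qed simp

lemma primary_decomposition:
  assumes fin: "finite S"
    and cmx: "\<And>i j. i \<in> S \<Longrightarrow> j \<in> S \<Longrightarrow> i \<noteq> j \<Longrightarrow> comaximal (q i) (q j)"
    and annih: "\<And>v. peval (\<Prod>i\<in>S. q i) v = 0"
  obtains e where "\<And>i v. i \<in> S \<Longrightarrow> peval (q i) (peval (e i) v) = 0"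
    and "\<And>i j w. i \<in> S \<Longrightarrow> j \<in> S \<Longrightarrow> peval (q i) w = 0 \<Longrightarrow> peval (e j) w = (if j = i then w else 0)"
    and "\<And>v. (\<Sum>i\<in>S. peval (e i) v) = v"
proof -
  obtain e where prod_dvd: "\<And>i. i \<in> S \<Longrightarrow> (\<Prod>j\<in>S. q j) dvd q i * e i"
    and dvd_other: "\<And>i j. i \<in> S \<Longrightarrow> j \<in> S \<Longrightarrow> i \<noteq> j \<Longrightarrow> q i dvd e j"
    and dvd_compl: "\<And>i. i \<in> S \<Longrightarrow> q i dvd 1 - e i"
    and dvd_sum: "(\<Prod>j\<in>S. q j) dvd 1 - (\<Sum>i\<in>S. e i)"
    by (rule comaximal_partition_of_unity[OF fin cmx]) auto
  show ?thesis
  proof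
    show "peval (q i) (peval (e i) v) = 0" if "i \<in> S" for i v
      using peval_dvd_eq_0[OF prod_dvd[OF that] annih] by (simp add: peval_mult)
  next
    fix i j w assume ij: "i \<in> S" "j \<in> S" and w: "peval (q i) w = 0"
    show "peval (e j) w = (if j = i then w else 0)"
    proof (cases "j = i")
      case True
      then show ?thesis
        using peval_dvd_eq_0[OF dvd_compl[OF ij(1)] w] by (simp add: peval_diff)
    qed (use peval_dvd_eq_0[OF dvd_other[OF ij(1,2)] w] in auto)
  next
    show "(\<Sum>i\<in>S. peval (e i) v) = v" for v
      using peval_dvd_eq_0[OF dvd_sum annih] by (simp add: peval_diff peval_sum)
  qed
qed

lemma eigenvalues_subset_roots:
  assumes "\<And>v. peval P v = 0"
  shows "eigenvalues scale \<phi> \<subseteq> {a. poly P a = 0}"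
proof
  fix a assume "a \<in> eigenvalues scale \<phi>"
  then obtain v where v: "v \<noteq> 0" "\<phi> v = a *s v" by (auto simp: eigenvalues_def)
  have "poly P a *s v = 0" using assms[of v] peval_eigenvector[OF v(2)] by simp
  then show "a \<in> {a. poly P a = 0}" using v(1) by simp
qed

text \<open>Factors \<open>(t - a)\<^bsup>k\<^esup>\<close> with \<open>a\<close> not an eigenvalue contribute the zero component, so
  the decomposition can be indexed by the eigenvalues alone.\<close>
lemma linear_factors_primary_decomposition:
  assumes annih: "\<And>v. peval (\<Prod>x\<in>#A. [:-x, 1:]) v = 0"
  obtains e where "finite (eigenvalues scale \<phi>)"
    and "\<And>a v. a \<in> eigenvalues scale \<phi> \<Longrightarrow> peval ([:-a, 1:] ^ count A a) (peval (e a) v) = 0"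
    and "\<And>a b w. a \<in> eigenvalues scale \<phi> \<Longrightarrow> b \<in> eigenvalues scale \<phi> \<Longrightarrow>
      peval ([:-a, 1:] ^ count A a) w = 0 \<Longrightarrow> peval (e b) w = (if b = a then w else 0)"
    and "\<And>v. (\<Sum>a\<in>eigenvalues scale \<phi>. peval (e a) v) = v"
proof -
  define R where "R = set_mset A"
  define q where "q a = [:-a, 1:] ^ count A a" for a
  have fin: "finite R" by (simp add: R_def)
  have annih_R: "peval (\<Prod>a\<in>R. q a) v = 0" for v
    using annih unfolding R_def q_def by (simp add: image_prod_mset_multiplicity)
  have cmx: "comaximal (q a) (q b)" if "a \<in> R" "b \<in> R" "a \<noteq> b" for a b
    unfolding q_def using comaximal_power[OF comaximal_linear_poly[OF that(3)]] .
  obtain e where e_ker: "\<And>a v. a \<in> R \<Longrightarrow> peval (q a) (peval (e a) v) = 0"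
    and e_on_ker: "\<And>a b w. a \<in> R \<Longrightarrow> b \<in> R \<Longrightarrow> peval (q a) w = 0 \<Longrightarrow>
      peval (e b) w = (if b = a then w else 0)"
    and e_sum: "\<And>v. (\<Sum>a\<in>R. peval (e a) v) = v"
    by (rule primary_decomposition[OF fin cmx annih_R]) auto
  have eigenvalues_R: "eigenvalues scale \<phi> \<subseteq> R"
    using eigenvalues_subset_roots[OF annih_R] fin by (auto simp: poly_prod prod_zero_iff q_def)
  have "(\<Sum>a\<in>eigenvalues scale \<phi>. peval (e a) v) = (\<Sum>a\<in>R. peval (e a) v)" for v
    using peval_linear_factor_power_eq_0D e_ker unfolding q_def
    by (intro sum.mono_neutral_left[OF fin eigenvalues_R]) blast
  then show ?thesis
    using e_sum
  proof (intro that)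
    show "finite (eigenvalues scale \<phi>)" using finite_subset[OF eigenvalues_R fin] .
    show "peval ([:-a, 1:] ^ count A a) (peval (e a) v) = 0" if "a \<in> eigenvalues scale \<phi>" for a v
      using e_ker[of a v] eigenvalues_R that unfolding q_def by blast
    show "peval (e b) w = (if b = a then w else 0)" if "a \<in> eigenvalues scale \<phi>"
      "b \<in> eigenvalues scale \<phi>" "peval ([:-a, 1:] ^ count A a) w = 0" for a b w
      using e_on_ker[of a b w] eigenvalues_R that unfolding q_def by blast
  qed simp
qed

definition poly_comb :: "'v list \<Rightarrow> 'k poly vec \<Rightarrow> 'v" where
  "poly_comb u x = (\<Sum>j<length u. peval (x $ j) (u ! j))"

definition poly_span :: "'v list \<Rightarrow> 'v set" where
  "poly_span u = poly_comb u ` carrier_vec (length u)"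

lemma poly_comb_add:
  "x \<in> carrier_vec (length u) \<Longrightarrow> y \<in> carrier_vec (length u) \<Longrightarrow>
    poly_comb u (x + y) = poly_comb u x + poly_comb u y"
  by (simp add: poly_comb_def peval_add sum.distrib)

lemma peval_poly_comb:
  "x \<in> carrier_vec (length u) \<Longrightarrow> peval p (poly_comb u x) = poly_comb u (p \<cdot>\<^sub>v x)"
  by (simp add: poly_comb_def peval_vsum peval_mult)

lemma poly_comb_unit_vec: "j < length u \<Longrightarrow> poly_comb u (unit_vec (length u) j) = u ! j"
  by (simp add: poly_comb_def if_distrib[of "\<lambda>p. peval p _"] sum.delta cong: if_cong)

lemma centralizer_poly_comb:
  "\<psi> \<in> centralizer scale \<phi> \<Longrightarrow> \<psi> (poly_comb u x) = (\<Sum>j<length u. peval (x $ j) (\<psi> (u ! j)))"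
  by (simp add: poly_comb_def linear_sum[OF centralizer_linear] peval_centralizer_commute)

lemma poly_comb_mult_mat_vec:
  assumes A: "A \<in> carrier_mat (length u) (length u)" and x: "x \<in> carrier_vec (length u)"
  shows "poly_comb u (A *\<^sub>v x) = (\<Sum>k<length u. peval (x $ k) (poly_comb u (col A k)))"
proof -
  let ?n = "length u"
  have "poly_comb u (A *\<^sub>v x) = (\<Sum>j<?n. peval (\<Sum>k<?n. A $$ (j, k) * x $ k) (u ! j))"
    unfolding poly_comb_def using A x
    by (intro sum.cong) (auto simp: scalar_prod_def atLeast0LessThan)
  also have "\<dots> = (\<Sum>j<?n. \<Sum>k<?n. peval (x $ k) (peval (A $$ (j, k)) (u ! j)))"
    by (simp add: peval_sum peval_mult mult.commute)
  also have "\<dots> = (\<Sum>k<?n. peval (x $ k) (poly_comb u (col A k)))"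
    unfolding poly_comb_def using A by (subst sum.swap) (auto simp: peval_vsum intro!: sum.cong)
  finally show ?thesis .
qed

lemma peval_in_poly_span: "w \<in> poly_span u \<Longrightarrow> peval p w \<in> poly_span u"
  by (auto simp: poly_span_def peval_poly_comb)

lemma nth_in_poly_span: "j < length u \<Longrightarrow> u ! j \<in> poly_span u"
  unfolding poly_span_def by (metis image_eqI poly_comb_unit_vec unit_vec_carrier)

lemma subspace_poly_span: "subspace (poly_span u)"
  unfolding subspace_def
proof (intro conjI ballI allI)
  have "poly_comb u (0\<^sub>v (length u)) = 0"
    by (simp add: poly_comb_def)
  then show "0 \<in> poly_span u"
    unfolding poly_span_def by (metis image_eqI zero_carrier_vec)
  show "x + y \<in> poly_span u" if "x \<in> poly_span u" "y \<in> poly_span u" for x y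
    using that unfolding poly_span_def by (auto simp: poly_comb_add[symmetric])
  show "c *s x \<in> poly_span u" if "x \<in> poly_span u" for c x
    using peval_in_poly_span[OF that, of "[:c:]"] by (simp add: peval_const)
qed

lemma poly_span_subset:
  assumes "set u \<subseteq> W" "subspace W" "\<And>p w. w \<in> W \<Longrightarrow> peval p w \<in> W"
  shows "poly_span u \<subseteq> W"
proof
  fix w assume "w \<in> poly_span u"
  then obtain x where "w = poly_comb u x" by (auto simp: poly_span_def)
  moreover have "peval (x $ j) (u ! j) \<in> W" if "j < length u" for j
    using assms(1,3) that nth_mem by blast
  ultimately show "w \<in> W"
    unfolding poly_comb_def by (auto intro: subspace_sum[OF assms(2)])
qed

subsection \<open>Matrices over \<open>K[t]\<close> representing the centralizer\<close>

definition mat_represents :: "'v list \<Rightarrow> 'k poly mat \<Rightarrow> ('v \<Rightarrow> 'v) \<Rightarrow> bool" where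
  "mat_represents u A \<psi> \<longleftrightarrow>
     (\<forall>x\<in>carrier_vec (length u). poly_comb u (A *\<^sub>v x) = \<psi> (poly_comb u x))"

text \<open>The matrices that lift an element of the centralizer along the surjection
  \<open>poly_comb u : K[t]\<^sup>n \<rightarrow> poly_span u\<close>; these play the role of the algebras \<open>\<M>\<^sub>i\<close>.\<close>
definition rep_mats :: "'v list \<Rightarrow> 'k poly mat set" where
  "rep_mats u = {A \<in> carrier_mat (length u) (length u).
     \<exists>\<psi>\<in>centralizer scale \<phi>. mat_represents u A \<psi>}"

text \<open>Only the restriction of \<open>represented u A\<close> to \<open>poly_span u\<close> is determined by \<open>A\<close>.\<close>
definition represented :: "'v list \<Rightarrow> 'k poly mat \<Rightarrow> 'v \<Rightarrow> 'v" where
  "represented u A = (SOME \<psi>. \<psi> \<in> centralizer scale \<phi> \<and> mat_represents u A \<psi>)"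

lemma mat_represents_one: "mat_represents u (1\<^sub>m (length u)) id"
  by (simp add: mat_represents_def)

lemma mat_represents_add:
  assumes "A \<in> carrier_mat (length u) (length u)" "B \<in> carrier_mat (length u) (length u)"
    and "mat_represents u A \<psi>" "mat_represents u B \<chi>"
  shows "mat_represents u (A + B) (\<lambda>v. \<psi> v + \<chi> v)"
  using assms by (auto simp: mat_represents_def add_mult_distrib_mat_vec poly_comb_add)

lemma mat_represents_mult:
  assumes "A \<in> carrier_mat (length u) (length u)" "B \<in> carrier_mat (length u) (length u)"
    and "mat_represents u A \<psi>" "mat_represents u B \<chi>"
  shows "mat_represents u (A * B) (\<psi> \<circ> \<chi>)"
  using assms by (auto simp: mat_represents_def)

lemma mat_represents_smult:
  assumes "A \<in> carrier_mat (length u) (length u)" and "mat_represents u A \<psi>"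
  shows "mat_represents u ([:c:] \<cdot>\<^sub>m A) (\<lambda>v. c *s \<psi> v)"
  unfolding mat_represents_def
proof
  fix x :: "'k poly vec" assume x: "x \<in> carrier_vec (length u)"
  have "([:c:] \<cdot>\<^sub>m A) *\<^sub>v x = [:c:] \<cdot>\<^sub>v (A *\<^sub>v x)"
    using assms(1) x by (intro eq_vecI) (auto simp: scalar_prod_def sum_distrib_left ac_simps)
  then show "poly_comb u (([:c:] \<cdot>\<^sub>m A) *\<^sub>v x) = c *s \<psi> (poly_comb u x)"
    using assms x by (simp add: mat_represents_def peval_poly_comb[symmetric] peval_const)
qed

lemma mat_represents_unique:
  "mat_represents u A \<psi> \<Longrightarrow> mat_represents u A \<chi> \<Longrightarrow> w \<in> poly_span u \<Longrightarrow> \<psi> w = \<chi> w"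
  by (auto simp: mat_represents_def poly_span_def)

lemma represented:
  assumes "A \<in> rep_mats u"
  shows "represented u A \<in> centralizer scale \<phi>" "mat_represents u A (represented u A)"
proof -
  have "\<exists>\<psi>. \<psi> \<in> centralizer scale \<phi> \<and> mat_represents u A \<psi>"
    using assms by (auto simp: rep_mats_def)
  then have "represented u A \<in> centralizer scale \<phi> \<and> mat_represents u A (represented u A)"
    unfolding represented_def by (rule someI_ex)
  then show "represented u A \<in> centralizer scale \<phi>" "mat_represents u A (represented u A)"
    by auto
qed

lemma represented_eqI:
  "A \<in> rep_mats u \<Longrightarrow> mat_represents u A \<psi> \<Longrightarrow> w \<in> poly_span u \<Longrightarrow> represented u A w = \<psi> w"
  using mat_represents_unique represented(2) by blast

lemma one_in_rep_mats: "1\<^sub>m (length u) \<in> rep_mats u"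
  using mat_represents_one id_in_centralizer by (auto simp: rep_mats_def)

lemma represented_one: "w \<in> poly_span u \<Longrightarrow> represented u (1\<^sub>m (length u)) w = w"
  using represented_eqI[OF one_in_rep_mats mat_represents_one] by simp

lemma rep_mats_add:
  assumes "A \<in> rep_mats u" "B \<in> rep_mats u"
  shows "A + B \<in> rep_mats u"
    and "w \<in> poly_span u \<Longrightarrow> represented u (A + B) w = represented u A w + represented u B w"
proof -
  have carrier: "A \<in> carrier_mat (length u) (length u)" "B \<in> carrier_mat (length u) (length u)"
    using assms by (auto simp: rep_mats_def)
  have rep: "mat_represents u (A + B) (\<lambda>v. represented u A v + represented u B v)"
    using mat_represents_add[OF carrier] represented(2) assms by blast
  moreover have "(\<lambda>v. represented u A v + represented u B v) \<in> centralizer scale \<phi>"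
    using centralizer_add represented(1) assms by blast
  ultimately show sum: "A + B \<in> rep_mats u"
    using carrier by (auto simp: rep_mats_def)
  show "w \<in> poly_span u \<Longrightarrow> represented u (A + B) w = represented u A w + represented u B w"
    using represented_eqI[OF sum rep] by simp
qed

lemma rep_mats_mult:
  assumes "A \<in> rep_mats u" "B \<in> rep_mats u"
  shows "A * B \<in> rep_mats u"
    and "w \<in> poly_span u \<Longrightarrow> represented u (A * B) w = represented u A (represented u B w)"
proof -
  have carrier: "A \<in> carrier_mat (length u) (length u)" "B \<in> carrier_mat (length u) (length u)"
    using assms by (auto simp: rep_mats_def)
  have rep: "mat_represents u (A * B) (represented u A \<circ> represented u B)"
    using mat_represents_mult[OF carrier] represented(2) assms by blast
  moreover have "represented u A \<circ> represented u B \<in> centralizer scale \<phi>"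
    using centralizer_comp represented(1) assms by blast
  ultimately show prod: "A * B \<in> rep_mats u"
    using carrier by (auto simp: rep_mats_def)
  show "w \<in> poly_span u \<Longrightarrow> represented u (A * B) w = represented u A (represented u B w)"
    using represented_eqI[OF prod rep] by simp
qed

lemma rep_mats_smult:
  assumes "A \<in> rep_mats u"
  shows "[:c:] \<cdot>\<^sub>m A \<in> rep_mats u"
    and "w \<in> poly_span u \<Longrightarrow> represented u ([:c:] \<cdot>\<^sub>m A) w = c *s represented u A w"
proof -
  have carrier: "A \<in> carrier_mat (length u) (length u)"
    using assms by (auto simp: rep_mats_def)
  have rep: "mat_represents u ([:c:] \<cdot>\<^sub>m A) (\<lambda>v. c *s represented u A v)"
    using mat_represents_smult[OF carrier] represented(2) assms by blast
  moreover have "(\<lambda>v. c *s represented u A v) \<in> centralizer scale \<phi>"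
    using centralizer_scale represented(1) assms by blast
  ultimately show smult: "[:c:] \<cdot>\<^sub>m A \<in> rep_mats u"
    using carrier by (auto simp: rep_mats_def)
  show "w \<in> poly_span u \<Longrightarrow> represented u ([:c:] \<cdot>\<^sub>m A) w = c *s represented u A w"
    using represented_eqI[OF smult rep] by simp
qed

lemma mat_poly_subalgebra_rep_mats: "mat_poly_subalgebra (length u) (rep_mats u)"
  unfolding mat_poly_subalgebra_def
  using one_in_rep_mats rep_mats_add(1) rep_mats_mult(1) rep_mats_smult(1)
  by (auto simp: rep_mats_def)

text \<open>The columns of the lifting matrix are coordinates of the images of the generators.\<close>
lemma exists_rep_mat:
  assumes \<psi>: "\<psi> \<in> centralizer scale \<phi>" and gen: "\<And>j. j < length u \<Longrightarrow> \<psi> (u ! j) \<in> poly_span u"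
  obtains A where "A \<in> rep_mats u" "mat_represents u A \<psi>"
proof -
  let ?n = "length u"
  have "\<forall>j\<in>{..<?n}. \<exists>x. x \<in> carrier_vec ?n \<and> poly_comb u x = \<psi> (u ! j)"
    using gen unfolding poly_span_def by force
  then have "\<exists>X. \<forall>j\<in>{..<?n}. X j \<in> carrier_vec ?n \<and> poly_comb u (X j) = \<psi> (u ! j)"
    by (rule bchoice)
  then obtain X where "\<forall>j\<in>{..<?n}. X j \<in> carrier_vec ?n \<and> poly_comb u (X j) = \<psi> (u ! j)"
    by blast
  then have X: "\<And>j. j < ?n \<Longrightarrow> X j \<in> carrier_vec ?n \<and> poly_comb u (X j) = \<psi> (u ! j)"
    by simp
  define A where "A = mat ?n ?n (\<lambda>(i, j). X j $ i)"
  have A: "A \<in> carrier_mat ?n ?n" by (simp add: A_def)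
  have col: "col A j = X j" if "j < ?n" for j
    using X[OF that] that by (auto simp: A_def)
  have "mat_represents u A \<psi>"
    unfolding mat_represents_def
  proof
    fix x :: "'k poly vec" assume x: "x \<in> carrier_vec ?n"
    have "poly_comb u (A *\<^sub>v x) = (\<Sum>k<?n. peval (x $ k) (poly_comb u (col A k)))"
      using A x by (rule poly_comb_mult_mat_vec)
    also have "\<dots> = \<psi> (poly_comb u x)"
      using col X \<psi> by (simp add: centralizer_poly_comb)
    finally show "poly_comb u (A *\<^sub>v x) = \<psi> (poly_comb u x)" .
  qed
  then show ?thesis using that A \<psi> by (auto simp: rep_mats_def)
qed

end

subsection \<open>Gluing along a decomposition into generated submodules\<close>

locale poly_decomposition = linear_endo scale \<phi>
  for scale :: "'k::field \<Rightarrow> 'v::ab_group_add \<Rightarrow> 'v" (infixr "*s" 75) and \<phi> +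
  fixes I :: "'i set" and e :: "'i \<Rightarrow> 'k poly" and u :: "'i \<Rightarrow> 'v list"
  assumes finite_index: "finite I"
    and proj_in_poly_span: "\<And>i v. i \<in> I \<Longrightarrow> peval (e i) v \<in> poly_span (u i)"
    and proj_on_poly_span:
      "\<And>i j w. i \<in> I \<Longrightarrow> j \<in> I \<Longrightarrow> w \<in> poly_span (u i) \<Longrightarrow> peval (e j) w = (if j = i then w else 0)"
    and sum_proj: "\<And>v. (\<Sum>i\<in>I. peval (e i) v) = v"
begin

lemma centralizer_maps_poly_span:
  assumes "\<psi> \<in> centralizer scale \<phi>" "i \<in> I" "w \<in> poly_span (u i)"
  shows "\<psi> w \<in> poly_span (u i)"
proof -
  have eq: "\<psi> w = peval (e i) (\<psi> w)"
    using proj_on_poly_span[OF assms(2,2,3)] peval_centralizer_commute[OF assms(1)] by simp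
  show ?thesis by (subst eq) (rule proj_in_poly_span[OF assms(2)])
qed

lemma centralizer_eqI:
  assumes "\<psi> \<in> centralizer scale \<phi>" "\<chi> \<in> centralizer scale \<phi>"
    and "\<And>i w. i \<in> I \<Longrightarrow> w \<in> poly_span (u i) \<Longrightarrow> \<psi> w = \<chi> w"
  shows "\<psi> = \<chi>"
proof
  fix v
  have "\<psi> v = \<psi> (\<Sum>i\<in>I. peval (e i) v)" by (simp only: sum_proj)
  also have "\<dots> = (\<Sum>i\<in>I. \<psi> (peval (e i) v))"
    by (rule linear_sum[OF centralizer_linear[OF assms(1)]])
  also have "\<dots> = (\<Sum>i\<in>I. \<chi> (peval (e i) v))"
    using assms(3) proj_in_poly_span by (intro sum.cong) auto
  also have "\<dots> = \<chi> (\<Sum>i\<in>I. peval (e i) v)"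
    by (rule linear_sum[OF centralizer_linear[OF assms(2)], symmetric])
  also have "\<dots> = \<chi> v" by (simp only: sum_proj)
  finally show "\<psi> v = \<chi> v" .
qed

definition glue :: "('i \<Rightarrow> 'k poly mat) \<Rightarrow> 'v \<Rightarrow> 'v" where
  "glue g v = (\<Sum>i\<in>I. represented (u i) (g i) (peval (e i) v))"

lemma glue_in_centralizer:
  assumes "g \<in> (\<Pi> i\<in>I. rep_mats (u i))"
  shows "glue g \<in> centralizer scale \<phi>"
proof -
  have "glue g = (\<lambda>v. \<Sum>i\<in>I. (represented (u i) (g i) \<circ> peval (e i)) v)"
    by (simp add: glue_def fun_eq_iff)
  also have "\<dots> \<in> centralizer scale \<phi>"
    using assms by (intro centralizer_sum centralizer_comp represented(1) peval_in_centralizer) auto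
  finally show ?thesis .
qed

lemma glue_on_poly_span:
  assumes g: "g \<in> (\<Pi> i\<in>I. rep_mats (u i))" and i: "i \<in> I" and w: "w \<in> poly_span (u i)"
  shows "glue g w = represented (u i) (g i) w"
proof -
  have "represented (u j) (g j) 0 = 0" if "j \<in> I" for j
    using g that by (intro linear_0 centralizer_linear represented(1)) auto
  then have "glue g w = (\<Sum>j\<in>I. if j = i then represented (u i) (g i) w else 0)"
    unfolding glue_def using proj_on_poly_span[OF i _ w] by (intro sum.cong) auto
  then show ?thesis using finite_index i by simp
qed

lemma glue_add:
  assumes g: "g \<in> (\<Pi> i\<in>I. rep_mats (u i))" and h: "h \<in> (\<Pi> i\<in>I. rep_mats (u i))"
  shows "glue (\<lambda>i\<in>I. g i + h i) = (\<lambda>v. glue g v + glue h v)"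
proof -
  have gh: "(\<lambda>i\<in>I. g i + h i) \<in> (\<Pi> i\<in>I. rep_mats (u i))"
    using g h by (auto simp: Pi_iff intro: rep_mats_add(1))
  show ?thesis
  proof (rule centralizer_eqI)
    show "glue (\<lambda>i\<in>I. g i + h i) \<in> centralizer scale \<phi>"
      using gh by (rule glue_in_centralizer)
    show "(\<lambda>v. glue g v + glue h v) \<in> centralizer scale \<phi>"
      using g h by (intro centralizer_add glue_in_centralizer)
    fix i w assume i: "i \<in> I" and w: "w \<in> poly_span (u i)"
    have "glue (\<lambda>i\<in>I. g i + h i) w = represented (u i) (g i + h i) w"
      using glue_on_poly_span[OF gh i w] i by simp
    also have "\<dots> = represented (u i) (g i) w + represented (u i) (h i) w"
      by (rule rep_mats_add(2)[OF Pi_mem[OF g i] Pi_mem[OF h i] w])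
    also have "\<dots> = glue g w + glue h w"
      by (simp only: glue_on_poly_span[OF g i w] glue_on_poly_span[OF h i w])
    finally show "glue (\<lambda>i\<in>I. g i + h i) w = glue g w + glue h w" .
  qed
qed

lemma glue_mult:
  assumes g: "g \<in> (\<Pi> i\<in>I. rep_mats (u i))" and h: "h \<in> (\<Pi> i\<in>I. rep_mats (u i))"
  shows "glue (\<lambda>i\<in>I. g i * h i) = glue g \<circ> glue h"
proof -
  have gh: "(\<lambda>i\<in>I. g i * h i) \<in> (\<Pi> i\<in>I. rep_mats (u i))"
    using g h by (auto simp: Pi_iff intro: rep_mats_mult(1))
  show ?thesis
  proof (rule centralizer_eqI)
    show "glue (\<lambda>i\<in>I. g i * h i) \<in> centralizer scale \<phi>"
      using gh by (rule glue_in_centralizer)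
    show "glue g \<circ> glue h \<in> centralizer scale \<phi>"
      using g h by (intro centralizer_comp glue_in_centralizer)
    fix i w assume i: "i \<in> I" and w: "w \<in> poly_span (u i)"
    have hw: "represented (u i) (h i) w \<in> poly_span (u i)"
      by (rule centralizer_maps_poly_span[OF represented(1)[OF Pi_mem[OF h i]] i w])
    have "glue (\<lambda>i\<in>I. g i * h i) w = represented (u i) (g i * h i) w"
      using glue_on_poly_span[OF gh i w] i by simp
    also have "\<dots> = represented (u i) (g i) (represented (u i) (h i) w)"
      by (rule rep_mats_mult(2)[OF Pi_mem[OF g i] Pi_mem[OF h i] w])
    also have "\<dots> = glue g (glue h w)"
      by (simp only: glue_on_poly_span[OF g i hw] glue_on_poly_span[OF h i w])
    finally show "glue (\<lambda>i\<in>I. g i * h i) w = (glue g \<circ> glue h) w" by simp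
  qed
qed

lemma glue_smult:
  assumes g: "g \<in> (\<Pi> i\<in>I. rep_mats (u i))"
  shows "glue (\<lambda>i\<in>I. [:c:] \<cdot>\<^sub>m g i) = (\<lambda>v. c *s glue g v)"
proof -
  have cg: "(\<lambda>i\<in>I. [:c:] \<cdot>\<^sub>m g i) \<in> (\<Pi> i\<in>I. rep_mats (u i))"
    using g by (auto simp: Pi_iff intro: rep_mats_smult(1))
  show ?thesis
  proof (rule centralizer_eqI)
    show "glue (\<lambda>i\<in>I. [:c:] \<cdot>\<^sub>m g i) \<in> centralizer scale \<phi>"
      using cg by (rule glue_in_centralizer)
    show "(\<lambda>v. c *s glue g v) \<in> centralizer scale \<phi>"
      using g by (intro centralizer_scale glue_in_centralizer)
    fix i w assume i: "i \<in> I" and w: "w \<in> poly_span (u i)"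
    have "glue (\<lambda>i\<in>I. [:c:] \<cdot>\<^sub>m g i) w = represented (u i) ([:c:] \<cdot>\<^sub>m g i) w"
      using glue_on_poly_span[OF cg i w] i by simp
    also have "\<dots> = c *s represented (u i) (g i) w"
      by (rule rep_mats_smult(2)[OF Pi_mem[OF g i] w])
    also have "\<dots> = c *s glue g w"
      by (simp only: glue_on_poly_span[OF g i w])
    finally show "glue (\<lambda>i\<in>I. [:c:] \<cdot>\<^sub>m g i) w = c *s glue g w" .
  qed
qed

lemma glue_one: "glue (\<lambda>i\<in>I. 1\<^sub>m (length (u i))) = id"
proof -
  have one: "(\<lambda>i\<in>I. 1\<^sub>m (length (u i))) \<in> (\<Pi> i\<in>I. rep_mats (u i))"
    using one_in_rep_mats by auto
  show ?thesis
  proof (rule centralizer_eqI)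
    show "glue (\<lambda>i\<in>I. 1\<^sub>m (length (u i))) \<in> centralizer scale \<phi>"
      using one by (rule glue_in_centralizer)
    show "glue (\<lambda>i\<in>I. 1\<^sub>m (length (u i))) w = id w" if "i \<in> I" "w \<in> poly_span (u i)" for i w
      using glue_on_poly_span[OF one that] represented_one[OF that(2)] that(1) by simp
  qed (rule id_in_centralizer)
qed

lemma glue_image: "glue ` (\<Pi>\<^sub>E i\<in>I. rep_mats (u i)) = centralizer scale \<phi>"
proof
  show "glue ` (\<Pi>\<^sub>E i\<in>I. rep_mats (u i)) \<subseteq> centralizer scale \<phi>"
    using glue_in_centralizer by (auto simp: PiE_def)
next
  show "centralizer scale \<phi> \<subseteq> glue ` (\<Pi>\<^sub>E i\<in>I. rep_mats (u i))"
  proof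
    fix \<psi> assume \<psi>: "\<psi> \<in> centralizer scale \<phi>"
    have "\<forall>i\<in>I. \<exists>A. A \<in> rep_mats (u i) \<and> mat_represents (u i) A \<psi>"
    proof
      fix i assume i: "i \<in> I"
      obtain A where "A \<in> rep_mats (u i)" "mat_represents (u i) A \<psi>"
        using exists_rep_mat[OF \<psi> centralizer_maps_poly_span[OF \<psi> i nth_in_poly_span]] .
      then show "\<exists>A. A \<in> rep_mats (u i) \<and> mat_represents (u i) A \<psi>" by blast
    qed
    then have "\<exists>A. \<forall>i\<in>I. A i \<in> rep_mats (u i) \<and> mat_represents (u i) (A i) \<psi>"
      by (rule bchoice)
    then obtain A where "\<forall>i\<in>I. A i \<in> rep_mats (u i) \<and> mat_represents (u i) (A i) \<psi>"
      by blast
    then have A: "\<And>i. i \<in> I \<Longrightarrow> A i \<in> rep_mats (u i) \<and> mat_represents (u i) (A i) \<psi>"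
      by simp
    define g where "g = (\<lambda>i\<in>I. A i)"
    have g: "g \<in> (\<Pi>\<^sub>E i\<in>I. rep_mats (u i))" using A by (simp add: g_def)
    then have g_Pi: "g \<in> (\<Pi> i\<in>I. rep_mats (u i))" by (simp add: PiE_def)
    have "glue g = \<psi>"
    proof (rule centralizer_eqI[OF glue_in_centralizer[OF g_Pi] \<psi>])
      show "glue g w = \<psi> w" if "i \<in> I" "w \<in> poly_span (u i)" for i w
        using glue_on_poly_span[OF g_Pi that] represented_eqI[of "A i" "u i" \<psi> w] A[OF that(1)] that
        by (simp add: g_def)
    qed
    then show "\<psi> \<in> glue ` (\<Pi>\<^sub>E i\<in>I. rep_mats (u i))" using g by blast
  qed
qed

end

subsection \<open>Finite dimension: annihilators and generators of primary components\<close>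

lemma (in vector_space) finite_dimensional_if_finite_span:
  assumes "finite S" "span S = UNIV"
  obtains B where "finite_dimensional_vector_space scale B"
proof -
  obtain B where B: "independent B" "UNIV \<subseteq> span B"
    using basis_exists[of UNIV] by blast
  have "finite B"
    using independent_span_bound[OF assms(1) B(1)] assms(2) by simp
  then have "finite_dimensional_vector_space scale B"
    using B by unfold_locales auto
  then show ?thesis ..
qed

locale fin_dim_linear_endo = linear_endo scale \<phi> + finite_dimensional_vector_space scale Basis
  for scale :: "'k::field \<Rightarrow> 'v::ab_group_add \<Rightarrow> 'v" (infixr "*s" 75) and \<phi> and Basis
begin

lemma subspace_peval_degree_less: "subspace ((\<lambda>p. peval p v) ` {p. p = 0 \<or> degree p < n})"
  unfolding subspace_def
proof (intro conjI ballI allI)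
  show "0 \<in> (\<lambda>p. peval p v) ` {p. p = 0 \<or> degree p < n}"
    by (rule image_eqI[of _ _ 0]) auto
next
  fix x y assume "x \<in> (\<lambda>p. peval p v) ` {p. p = 0 \<or> degree p < n}"
    "y \<in> (\<lambda>p. peval p v) ` {p. p = 0 \<or> degree p < n}"
  then obtain p q where "x = peval p v" "y = peval q v" "p = 0 \<or> degree p < n" "q = 0 \<or> degree q < n"
    by auto
  then show "x + y \<in> (\<lambda>p. peval p v) ` {p. p = 0 \<or> degree p < n}"
    by (intro image_eqI[of _ _ "p + q"])
      (auto simp: peval_add intro: le_less_trans[OF degree_add_le_max])
next
  fix c x assume "x \<in> (\<lambda>p. peval p v) ` {p. p = 0 \<or> degree p < n}"
  then obtain p where "x = peval p v" "p = 0 \<or> degree p < n"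
    by auto
  then show "c *s x \<in> (\<lambda>p. peval p v) ` {p. p = 0 \<or> degree p < n}"
    by (intro image_eqI[of _ _ "Polynomial.smult c p"])
      (auto simp: peval_smult intro: le_less_trans[OF degree_smult_le])
qed

text \<open>If no \<open>\<phi>\<^sup>i v\<close> lay in the span of the earlier iterates, the dimensions of these
  spans would grow beyond the dimension of the space.\<close>
lemma exists_annihilating_poly_vec: "\<exists>p. p \<noteq> 0 \<and> peval p v = 0"
proof -
  define Q where "Q i = (\<lambda>p. peval p v) ` {p. p = 0 \<or> degree p < i}" for i
  have subspace_Q: "subspace (Q i)" for i
    unfolding Q_def by (rule subspace_peval_degree_less)
  have iterate_in_Q: "(\<phi> ^^ i) v \<in> Q (Suc i)" for i
    unfolding Q_def by (rule image_eqI[of _ _ "monom 1 i"]) (auto simp: peval_monom degree_monom_eq)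
  have "\<exists>i. (\<phi> ^^ i) v \<in> Q i"
  proof (rule ccontr)
    assume new: "\<nexists>i. (\<phi> ^^ i) v \<in> Q i"
    have "i \<le> dim (Q i)" for i
    proof (induction i)
      case (Suc i)
      have "(\<phi> ^^ i) v \<notin> span (Q i)"
        using new span_eq_iff[of "Q i"] subspace_Q by metis
      then have "dim (Q i) + 1 = dim (insert ((\<phi> ^^ i) v) (Q i))"
        by (simp add: dim_insert)
      also have "\<dots> \<le> dim (Q (Suc i))"
        using iterate_in_Q by (intro dim_subset) (auto simp: Q_def)
      finally show ?case using Suc by simp
    qed simp
    then show False
      using dim_subset_UNIV[of "Q (Suc dimension)"] by (metis Suc_n_not_le_n le_trans)
  qed
  then obtain i q where iq: "(\<phi> ^^ i) v = peval q v" "q = 0 \<or> degree q < i"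
    unfolding Q_def by auto
  then have "coeff (monom 1 i - q) i = 1" by (auto simp: coeff_eq_0)
  then have "monom 1 i - q \<noteq> 0" by auto
  moreover have "peval (monom 1 i - q) v = 0"
    using iq(1) by (simp add: peval_diff peval_monom)
  ultimately show ?thesis by blast
qed

lemma exists_annihilating_poly: "\<exists>p. p \<noteq> 0 \<and> (\<forall>v. peval p v = 0)"
proof -
  have "\<exists>p. \<forall>v. p v \<noteq> 0 \<and> peval (p v) v = 0"
    using exists_annihilating_poly_vec by (intro choice) blast
  then obtain p where p: "\<And>v. p v \<noteq> 0 \<and> peval (p v) v = 0"
    by blast
  define P where "P = (\<Prod>b\<in>Basis. p b)"
  have "peval P b = 0" if "b \<in> Basis" for b
    using peval_dvd_eq_0[OF dvd_prodI[OF finite_Basis that]] p unfolding P_def by blast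
  then have "Basis \<subseteq> {v. peval P v = 0}" by blast
  then have "span Basis \<subseteq> {v. peval P v = 0}"
    by (intro span_minimal linear_subspace_kernel linear_peval)
  moreover have "P \<noteq> 0" using p finite_Basis by (simp add: P_def)
  ultimately show ?thesis using span_Basis by auto
qed

lemma dim_le_dim_image_add_dim_kernel:
  assumes f: "Vector_Spaces.linear scale scale f"
  shows "dim W \<le> dim (f ` W) + dim {v. f v = 0}"
proof -
  obtain B where B: "B \<subseteq> f ` W" "independent B" "f ` W \<subseteq> span B" "card B = dim (f ` W)"
    using basis_exists by blast
  obtain K where K: "independent K" "{v. f v = 0} \<subseteq> span K" "card K = dim {v. f v = 0}"
    using basis_exists by blast
  have "\<forall>b\<in>B. \<exists>w. w \<in> W \<and> f w = b" using B(1) by auto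
  then have "\<exists>pre. \<forall>b\<in>B. pre b \<in> W \<and> f (pre b) = b" by (rule bchoice)
  then obtain pre where pre: "\<And>b. b \<in> B \<Longrightarrow> pre b \<in> W \<and> f (pre b) = b"
    by blast
  have "W \<subseteq> span (pre ` B \<union> K)"
  proof
    fix w assume "w \<in> W"
    then have "f w \<in> span (f ` pre ` B)"
      using B(3) pre by (auto simp: image_image cong: image_cong)
    then obtain x where x: "x \<in> span (pre ` B)" "f w = f x"
      using linear_span_image[OF f] by auto
    then have "w - x \<in> span K" using K(2) by (simp add: linear_diff[OF f] subset_iff)
    then have "x + (w - x) \<in> span (pre ` B \<union> K)"
      using x(1) by (meson span_add span_mono subsetD sup_ge1 sup_ge2)
    then show "w \<in> span (pre ` B \<union> K)" by simp
  qed
  then have "dim W \<le> card (pre ` B \<union> K)"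
    using K(1) B(2) by (intro dim_le_card) (auto intro: finiteI_independent)
  also have "\<dots> \<le> card (pre ` B) + card K" by (rule card_Un_le)
  also have "\<dots> \<le> card B + card K"
    using card_image_le[OF finiteI_independent[OF B(2)]] by simp
  finally show ?thesis using B(4) K(3) by simp
qed

lemma exists_complement_of_image:
  assumes f: "Vector_Spaces.linear scale scale f" and W: "subspace W" and fW: "f ` W \<subseteq> W"
  obtains C where "C \<subseteq> W" "finite C" "card C \<le> dim {v. f v = 0}"
    "\<And>w. w \<in> W \<Longrightarrow> \<exists>x\<in>span C. w - x \<in> f ` W"
proof -
  obtain B1 where B1: "B1 \<subseteq> f ` W" "independent B1" "card B1 = dim (f ` W)"
    using basis_exists by blast
  obtain B where B: "B1 \<subseteq> B" "B \<subseteq> W" "independent B" "W \<subseteq> span B"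
    using maximal_independent_subset_extend[of B1 W] B1(1,2) fW by blast
  have finB: "finite B" using B(3) by (rule finiteI_independent)
  have card: "card (B - B1) \<le> dim {v. f v = 0}"
    using card_Diff_subset[OF finite_subset[OF B(1) finB] B(1)] B1(3)
      basis_card_eq_dim[OF B(2,4,3)] dim_le_dim_image_add_dim_kernel[OF f, of W]
    by linarith
  have cover: "\<exists>x\<in>span (B - B1). w - x \<in> f ` W" if "w \<in> W" for w
  proof -
    have "(B - B1) \<union> B1 = B" using B(1) by blast
    then have "w \<in> span ((B - B1) \<union> B1)" using B(4) that by auto
    then obtain x y where "w = x + y" "x \<in> span (B - B1)" "y \<in> span B1"
      unfolding span_Un by blast
    moreover have "span B1 \<subseteq> f ` W"
      using span_minimal[OF B1(1) linear_subspace_image[OF f W]] .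
    ultimately show ?thesis by force
  qed
  show ?thesis by (rule that[OF _ _ card cover]) (use B(2) finB in auto)
qed

text \<open>A Nakayama-type argument: \<open>p(\<phi>)\<close> is nilpotent on the kernel of \<open>p(\<phi>)\<^sup>k\<close>.\<close>
lemma kernel_power_subset_poly_span:
  assumes cover: "\<And>w. peval (p ^ k) w = 0 \<Longrightarrow>
      \<exists>x\<in>span (set u). \<exists>w'. peval (p ^ k) w' = 0 \<and> w = x + peval p w'"
  shows "{w. peval (p ^ k) w = 0} \<subseteq> poly_span u"
proof -
  have span_u: "span (set u) \<subseteq> poly_span u"
    by (intro span_minimal subspace_poly_span) (auto simp: in_set_conv_nth nth_in_poly_span)
  have reach: "\<exists>g\<in>poly_span u. \<exists>w'. peval (p ^ k) w' = 0 \<and> w = g + peval (p ^ i) w'"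
    if "peval (p ^ k) w = 0" for i w
    using that
  proof (induction i arbitrary: w)
    case 0
    then show ?case using subspace_0[OF subspace_poly_span] by force
  next
    case (Suc i)
    then obtain g w' where g: "g \<in> poly_span u" and w': "peval (p ^ k) w' = 0"
      and w: "w = g + peval (p ^ i) w'" by blast
    obtain x w'' where x: "x \<in> span (set u)" and w'': "peval (p ^ k) w'' = 0"
      and w'_eq: "w' = x + peval p w''" using cover[OF w'] by blast
    have "w = (g + peval (p ^ i) x) + peval (p ^ Suc i) w''"
      by (simp add: w w'_eq peval_vadd peval_mult add.assoc power_Suc2 del: power_Suc)
    moreover have "g + peval (p ^ i) x \<in> poly_span u"
      using g x span_u by (intro subspace_add[OF subspace_poly_span] peval_in_poly_span) auto
    ultimately show ?case using w'' by blast
  qed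
  show ?thesis
  proof
    fix w assume "w \<in> {w. peval (p ^ k) w = 0}"
    then obtain g w' where "g \<in> poly_span u" "peval (p ^ k) w' = 0" "w = g + peval (p ^ k) w'"
      using reach[of w k] by auto
    then show "w \<in> poly_span u" by simp
  qed
qed

lemma kernel_power_generated:
  obtains u where "length u = dim {v. peval p v = 0}" "poly_span u = {w. peval (p ^ k) w = 0}"
proof -
  define W where "W = {w. peval (p ^ k) w = 0}"
  have W: "subspace W" unfolding W_def by (rule linear_subspace_kernel[OF linear_peval])
  have closed: "peval q w \<in> W" if "w \<in> W" for q w
    using that peval_commute[of "p ^ k" q w] by (simp add: W_def)
  then have "peval p ` W \<subseteq> W" by blast
  then obtain C where C: "C \<subseteq> W" "finite C" "card C \<le> dim {v. peval p v = 0}"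
    and cover: "\<And>w. w \<in> W \<Longrightarrow> \<exists>x\<in>span C. w - x \<in> peval p ` W"
    by (rule exists_complement_of_image[OF linear_peval W]) auto
  obtain cs where cs: "set cs = C" "distinct cs" using finite_distinct_list[OF C(2)] by blast
  define u where "u = cs @ replicate (dim {v. peval p v = 0} - length cs) 0"
  have "length cs = card C" using distinct_card[OF cs(2)] cs(1) by simp
  then have "length u = dim {v. peval p v = 0}" using C(3) by (simp add: u_def)
  moreover have "poly_span u = W"
  proof
    show "poly_span u \<subseteq> W"
      using C(1) subspace_0[OF W] by (intro poly_span_subset W closed) (auto simp: u_def cs)
    have span_C: "span C \<subseteq> span (set u)" by (intro span_mono) (auto simp: u_def cs)
    show "W \<subseteq> poly_span u"
      unfolding W_def
    proof (rule kernel_power_subset_poly_span)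
      fix w assume "peval (p ^ k) w = 0"
      then have "w \<in> W" by (simp add: W_def)
      then obtain x where x: "x \<in> span C" "w - x \<in> peval p ` W"
        using cover by blast
      then obtain w' where w': "w' \<in> W" "w - x = peval p w'" by blast
      then have "w = x + peval p w'" by (simp add: algebra_simps)
      then show "\<exists>x\<in>span (set u). \<exists>w'. peval (p ^ k) w' = 0 \<and> w = x + peval p w'"
        using x(1) span_C w'(1) unfolding W_def by blast
    qed
  qed
  ultimately show ?thesis unfolding W_def by (rule that)
qed

lemma eigenvalue_decomposition:
  assumes annih: "\<And>v. peval (\<Prod>x\<in>#A. [:-x, 1:]) v = 0"
  obtains e u where "poly_decomposition scale \<phi> (eigenvalues scale \<phi>) e u"
    and "\<And>a. a \<in> eigenvalues scale \<phi> \<Longrightarrow> length (u a) = geom_mult scale \<phi> a"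
proof -
  obtain e where fin: "finite (eigenvalues scale \<phi>)"
    and e_ker: "\<And>a v. a \<in> eigenvalues scale \<phi> \<Longrightarrow> peval ([:-a, 1:] ^ count A a) (peval (e a) v) = 0"
    and e_on_ker: "\<And>a b w. a \<in> eigenvalues scale \<phi> \<Longrightarrow> b \<in> eigenvalues scale \<phi> \<Longrightarrow>
      peval ([:-a, 1:] ^ count A a) w = 0 \<Longrightarrow> peval (e b) w = (if b = a then w else 0)"
    and e_sum: "\<And>v. (\<Sum>a\<in>eigenvalues scale \<phi>. peval (e a) v) = v"
    by (rule linear_factors_primary_decomposition[OF annih]) blast
  have "\<forall>a. \<exists>u. length u = geom_mult scale \<phi> a \<and>
      poly_span u = {w. peval ([:-a, 1:] ^ count A a) w = 0}"
  proof
    fix a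
    obtain u where "length u = dim {v. peval [:-a, 1:] v = 0}"
      "poly_span u = {w. peval ([:-a, 1:] ^ count A a) w = 0}"
      by (rule kernel_power_generated)
    then show "\<exists>u. length u = geom_mult scale \<phi> a \<and>
        poly_span u = {w. peval ([:-a, 1:] ^ count A a) w = 0}"
      unfolding geom_mult_def kernel_linear_factor by blast
  qed
  then have "\<exists>u. \<forall>a. length (u a) = geom_mult scale \<phi> a \<and>
      poly_span (u a) = {w. peval ([:-a, 1:] ^ count A a) w = 0}"
    by (rule choice)
  then obtain u where len: "\<And>a. length (u a) = geom_mult scale \<phi> a"
    and span: "\<And>a. poly_span (u a) = {w. peval ([:-a, 1:] ^ count A a) w = 0}"
    by blast
  have "poly_decomposition scale \<phi> (eigenvalues scale \<phi>) e u"
  proof (intro poly_decomposition.intro[OF linear_endo_axioms] poly_decomposition_axioms.intro)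
    show "peval (e a) v \<in> poly_span (u a)" if "a \<in> eigenvalues scale \<phi>" for a v
      using e_ker[OF that] span by simp
    show "peval (e b) w = (if b = a then w else 0)"
      if "a \<in> eigenvalues scale \<phi>" "b \<in> eigenvalues scale \<phi>" "w \<in> poly_span (u a)" for a b w
      using e_on_ker[OF that(1,2)] that(3) span by simp
  qed (use fin e_sum in auto)
  then show ?thesis using that len by blast
qed

end

theorem theorem5p2:
  fixes scale :: "'k::alg_closed_field \<Rightarrow> 'v::ab_group_add \<Rightarrow> 'v"
    and \<phi> :: "'v \<Rightarrow> 'v"
  assumes "vector_space scale"
    and "\<exists>B. finite B \<and> module.span scale B = UNIV"
    and "Vector_Spaces.linear scale scale \<phi>"
  shows "\<exists>(M :: 'k \<Rightarrow> 'k poly mat set) (f :: ('k \<Rightarrow> 'k poly mat) \<Rightarrow> 'v \<Rightarrow> 'v).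
    (\<forall>\<mu>\<in>eigenvalues scale \<phi>. mat_poly_subalgebra (geom_mult scale \<phi> \<mu>) (M \<mu>)) \<and>
    (\<forall>g\<in>(\<Pi>\<^sub>E \<mu>\<in>eigenvalues scale \<phi>. M \<mu>). \<forall>h\<in>(\<Pi>\<^sub>E \<mu>\<in>eigenvalues scale \<phi>. M \<mu>).
        f (\<lambda>\<mu>\<in>eigenvalues scale \<phi>. g \<mu> + h \<mu>) = (\<lambda>v. f g v + f h v) \<and>
        f (\<lambda>\<mu>\<in>eigenvalues scale \<phi>. g \<mu> * h \<mu>) = f g \<circ> f h) \<and>
    (\<forall>c. \<forall>g\<in>(\<Pi>\<^sub>E \<mu>\<in>eigenvalues scale \<phi>. M \<mu>).
        f (\<lambda>\<mu>\<in>eigenvalues scale \<phi>. [:c:] \<cdot>\<^sub>m g \<mu>) = (\<lambda>v. scale c (f g v))) \<and>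
    f (\<lambda>\<mu>\<in>eigenvalues scale \<phi>. 1\<^sub>m (geom_mult scale \<phi> \<mu>)) = id \<and>
    f ` (\<Pi>\<^sub>E \<mu>\<in>eigenvalues scale \<phi>. M \<mu>) = centralizer scale \<phi>"
proof -
  interpret V: vector_space scale by fact
  obtain Basis where "finite_dimensional_vector_space scale Basis"
    using assms(2) V.finite_dimensional_if_finite_span by blast
  then interpret fin_dim_linear_endo scale \<phi> Basis
    using assms by (simp add: fin_dim_linear_endo_def linear_endo_def linear_endo_axioms_def
      finite_dimensional_vector_space_def)
  obtain P where P: "P \<noteq> 0" "\<And>v. peval P v = 0"
    using exists_annihilating_poly by blast
  then obtain A where A: "P = Polynomial.smult (lead_coeff P) (\<Prod>x\<in>#A. [:-x, 1:])"
    using alg_closed_imp_factorization by blast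
  have "peval (\<Prod>x\<in>#A. [:-x, 1:]) v = 0" for v
    using P peval_smult[of "lead_coeff P" "\<Prod>x\<in>#A. [:-x, 1:]" v] by (simp flip: A)
  then obtain e u where "poly_decomposition scale \<phi> (eigenvalues scale \<phi>) e u"
    and len: "\<And>a. a \<in> eigenvalues scale \<phi> \<Longrightarrow> length (u a) = geom_mult scale \<phi> a"
    using eigenvalue_decomposition by blast
  then interpret D: poly_decomposition scale \<phi> "eigenvalues scale \<phi>" e u by simp
  have Pi: "g \<in> (\<Pi> a\<in>eigenvalues scale \<phi>. rep_mats (u a))"
    if "g \<in> (\<Pi>\<^sub>E a\<in>eigenvalues scale \<phi>. rep_mats (u a))" for g
    using that by (simp add: PiE_def)
  have one: "(\<lambda>a\<in>eigenvalues scale \<phi>. 1\<^sub>m (geom_mult scale \<phi> a)) =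
      (\<lambda>a\<in>eigenvalues scale \<phi>. 1\<^sub>m (length (u a)))"
    using len by (intro restrict_ext) simp
  have "D.glue (\<lambda>a\<in>eigenvalues scale \<phi>. 1\<^sub>m (geom_mult scale \<phi> a)) = id"
    unfolding one by (rule D.glue_one)
  moreover have "mat_poly_subalgebra (geom_mult scale \<phi> a) (rep_mats (u a))"
    if "a \<in> eigenvalues scale \<phi>" for a
    using mat_poly_subalgebra_rep_mats[of "u a"] unfolding len[OF that] .
  ultimately show ?thesis
    using D.glue_add[OF Pi Pi] D.glue_mult[OF Pi Pi] D.glue_smult[OF Pi] D.glue_image
    by (intro exI[of _ "\<lambda>a. rep_mats (u a)"] exI[of _ D.glue]) blast
qed

end
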